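(* Let $b>1$, $L>\pi$, and $\bar a\in\left(0,1-\frac{\pi^2}{L^2}\right)$. Then there exists a pair $(\phi,\psi)$ solving $$-\phi''=\phi(1-\phi-\bar a\psi),\quad -\psi''=\psi(1-b\phi-\psi)\ \text{ in }(0,L),\qquad \phi(0)=\phi(L)=0,\ \psi(0)=\psi(L)=1,$$ with $0<\phi(x)<1$ and $0<\psi(x)<1$ for all $x\in(0,L)$. *)

theory Defs
  imports "HOL-Analysis.Analysis"
begin

end

theory Submission
  imports Defs
begin

text \<open>
  Adding \<open>k\<^sup>2\<close> times the unknown to both sides turns each equation into
  \<open>-w'' + k\<^sup>2 w = F\<close>, which on \<open>[0, L]\<close> is solved explicitly by a Green function
  with positive kernel. For \<open>k\<^sup>2 \<ge> b + 2\<close> the shifted reaction terms are increasing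
  in the own species and decreasing in the competitor on \<open>[0, 1]\<^sup>2\<close>, so the
  solution map is monotone for the order that increases \<open>\<phi>\<close> and decreases \<open>\<psi>\<close>.
  Since \<open>abar < 1 - \<pi>\<^sup>2/L\<^sup>2\<close>, the pair \<open>(e sin(\<pi>x/L), 1)\<close> with
  \<open>e = 1 - abar - \<pi>\<^sup>2/L\<^sup>2\<close> is a subsolution; the iterates starting there are
  monotone and stay in \<open>[0, 1]\<^sup>2\<close>, and dominated convergence passes their pointwise
  limit through the Green operator, giving a solution with \<open>e sin(\<pi>x/L) \<le> \<phi> \<le> 1\<close>
  and \<open>0 \<le> \<psi> \<le> 1\<close>. The bounds become strict by the maximum principle: at an interior
  point with \<open>\<phi> = 1\<close> (or \<open>\<psi> = 1\<close>) the equation forces \<open>\<phi>'' > 0\<close> (or \<open>\<psi>'' > 0\<close>).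
\<close>

section \<open>The Dirichlet problem for \<open>-w'' + k\<^sup>2 w = F\<close>\<close>

text \<open>
  The solution of \<open>-w'' + k\<^sup>2 w = F\<close> on \<open>[0, L]\<close> with \<open>w 0 = \<alpha>\<close> and \<open>w L = \<beta>\<close>:
  the boundary part plus \<open>\<integral>\<^sub>0\<^sup>L G x y F y dy\<close> with the Green function
  \<open>G x y = sinh (k min x y) sinh (k (L - max x y)) / (k sinh (k L))\<close>.
\<close>

definition dirichlet_solution ::
  "real \<Rightarrow> real \<Rightarrow> real \<Rightarrow> real \<Rightarrow> (real \<Rightarrow> real) \<Rightarrow> real \<Rightarrow> real" where
"dirichlet_solution k L \<alpha> \<beta> F x = (\<alpha> * sinh (k*(L-x)) + \<beta> * sinh (k*x)) / sinh (k*L)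
  + (sinh (k*(L-x)) * integral {0..x} (\<lambda>y. sinh (k*y) * F y)
     + sinh (k*x) * (integral {0..L} (\<lambda>y. sinh (k*(L-y)) * F y)
                     - integral {0..x} (\<lambda>y. sinh (k*(L-y)) * F y)))
    / (k * sinh (k*L))"

definition dirichlet_solution_deriv ::
  "real \<Rightarrow> real \<Rightarrow> real \<Rightarrow> real \<Rightarrow> (real \<Rightarrow> real) \<Rightarrow> real \<Rightarrow> real" where
"dirichlet_solution_deriv k L \<alpha> \<beta> F x = k * (\<beta> * cosh (k*x) - \<alpha> * cosh (k*(L-x))) / sinh (k*L)
  + (cosh (k*x) * (integral {0..L} (\<lambda>y. sinh (k*(L-y)) * F y)
                   - integral {0..x} (\<lambda>y. sinh (k*(L-y)) * F y))
     - cosh (k*(L-x)) * integral {0..x} (\<lambda>y. sinh (k*y) * F y)) / sinh (k*L)"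

lemma integral_upper_bound_has_real_derivative:
  assumes "continuous_on {a..b} h" "x \<in> {a<..<b}"
  shows "((\<lambda>x. integral {a..x} h) has_real_derivative h x) (at x)"
proof -
  have "((\<lambda>x. integral {a..x} h) has_real_derivative h x) (at x within {a..b})"
    using assms by (intro integral_has_real_derivative) auto
  then show ?thesis
    using assms(2) by (simp add: at_within_Icc_at)
qed

lemma
  assumes k: "k > 0" and L: "L > 0" and F: "continuous_on {0..L} F" and x: "x \<in> {0<..<L}"
  shows dirichlet_solution_has_derivative:
      "(dirichlet_solution k L \<alpha> \<beta> F has_real_derivative dirichlet_solution_deriv k L \<alpha> \<beta> F x) (at x)"
    and dirichlet_solution_deriv_has_derivative:
      "(dirichlet_solution_deriv k L \<alpha> \<beta> F has_real_derivative
          k^2 * dirichlet_solution k L \<alpha> \<beta> F x - F x) (at x)"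
proof -
  define A where "A = (\<lambda>x. integral {0..x} (\<lambda>y. sinh (k*y) * F y))"
  define B where "B = (\<lambda>x. integral {0..x} (\<lambda>y. sinh (k*(L-y)) * F y))"
  define C where "C = integral {0..L} (\<lambda>y. sinh (k*(L-y)) * F y)"
  define s where "s = sinh (k*L)"
  have s: "s > 0"
    using k L by (simp add: s_def)
  have dA: "(A has_real_derivative sinh (k*x) * F x) (at x)"
    unfolding A_def by (rule integral_upper_bound_has_real_derivative[OF _ x]) (intro continuous_intros F)
  have dB: "(B has_real_derivative sinh (k*(L-x)) * F x) (at x)"
    unfolding B_def by (rule integral_upper_bound_has_real_derivative[OF _ x]) (intro continuous_intros F)
  have sol: "dirichlet_solution k L \<alpha> \<beta> F = (\<lambda>x. (\<alpha>/s) * sinh (k*(L-x)) + (\<beta>/s) * sinh (k*x)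
      + (1/(k * s)) * (sinh (k*(L-x)) * A x) + (1/(k * s)) * (sinh (k*x) * (C - B x)))"
    by (rule ext) (simp add: dirichlet_solution_def A_def B_def C_def s_def
        add_divide_distrib diff_divide_distrib)
  have sol': "dirichlet_solution_deriv k L \<alpha> \<beta> F = (\<lambda>x. (k*\<beta>/s) * cosh (k*x) - (k*\<alpha>/s) * cosh (k*(L-x))
      + (1/s) * (cosh (k*x) * (C - B x)) - (1/s) * (cosh (k*(L-x)) * A x))"
    by (rule ext) (simp add: dirichlet_solution_deriv_def A_def B_def C_def s_def
        add_divide_distrib diff_divide_distrib right_diff_distrib)
  show "(dirichlet_solution k L \<alpha> \<beta> F has_real_derivative dirichlet_solution_deriv k L \<alpha> \<beta> F x) (at x)"
    unfolding sol sol'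
    by (rule derivative_eq_intros refl dA dB)+ (use s k in \<open>auto simp: field_simps\<close>)
  have wronskian: "cosh (k*(L-x)) * sinh (k*x) + cosh (k*x) * sinh (k*(L-x)) = s"
    using sinh_add[of "k*x" "k*(L-x)"] by (simp add: algebra_simps s_def)
  show "(dirichlet_solution_deriv k L \<alpha> \<beta> F has_real_derivative
          k^2 * dirichlet_solution k L \<alpha> \<beta> F x - F x) (at x)"
    unfolding sol sol'
    by (rule derivative_eq_intros refl dA dB)+
      (use s k wronskian in \<open>auto simp: field_simps power2_eq_square\<close>)
qed

lemma dirichlet_solution_0 [simp]: "k > 0 \<Longrightarrow> L > 0 \<Longrightarrow> dirichlet_solution k L \<alpha> \<beta> F 0 = \<alpha>"
  by (simp add: dirichlet_solution_def)

lemma dirichlet_solution_L [simp]: "k > 0 \<Longrightarrow> L > 0 \<Longrightarrow> dirichlet_solution k L \<alpha> \<beta> F L = \<beta>"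
  by (simp add: dirichlet_solution_def)

lemma dirichlet_solution_zero: "dirichlet_solution k L 0 0 (\<lambda>_. 0) x = 0"
  by (simp add: dirichlet_solution_def)

lemma continuous_on_dirichlet_solution:
  assumes k: "k > 0" and L: "L > 0"
    and "(\<lambda>y. sinh (k*y) * F y) integrable_on {0..L}"
    and "(\<lambda>y. sinh (k*(L-y)) * F y) integrable_on {0..L}"
  shows "continuous_on {0..L} (dirichlet_solution k L \<alpha> \<beta> F)"
proof -
  have "sinh (k*L) \<noteq> 0"
    using k L by simp
  then show ?thesis
    unfolding dirichlet_solution_def
    by (intro continuous_intros indefinite_integral_continuous_1 assms) auto
qed

lemma continuous_on_dirichlet_solution_of_continuous:
  assumes "k > 0" "L > 0" "continuous_on {0..L} F"
  shows "continuous_on {0..L} (dirichlet_solution k L \<alpha> \<beta> F)"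
  using assms
  by (intro continuous_on_dirichlet_solution integrable_continuous_interval continuous_intros)

lemma eq_dirichlet_solution_has_derivatives:
  assumes k: "k > 0" and L: "L > 0" and F: "continuous_on {0..L} F"
    and w: "\<And>y. y \<in> {0..L} \<Longrightarrow> w y = dirichlet_solution k L \<alpha> \<beta> F y"
    and x: "x \<in> {0<..<L}"
  shows "(w has_real_derivative dirichlet_solution_deriv k L \<alpha> \<beta> F x) (at x)"
    and "(dirichlet_solution_deriv k L \<alpha> \<beta> F has_real_derivative k^2 * w x - F x) (at x)"
proof -
  show "(w has_real_derivative dirichlet_solution_deriv k L \<alpha> \<beta> F x) (at x)"
    by (rule has_field_derivative_transform_within_open[OF
          dirichlet_solution_has_derivative[OF k L F x] open_greaterThanLessThan x])
      (use w in auto)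
  show "(dirichlet_solution_deriv k L \<alpha> \<beta> F has_real_derivative k^2 * w x - F x) (at x)"
    using dirichlet_solution_deriv_has_derivative[OF k L F x] w[of x] x by simp
qed

section \<open>Maximum principle\<close>

lemma second_deriv_nonpos_at_interior_max:
  fixes u u' :: "real \<Rightarrow> real"
  assumes "a < x0" "x0 < b"
    and du: "\<And>x. x \<in> {a<..<b} \<Longrightarrow> (u has_real_derivative u' x) (at x)"
    and d2u: "(u' has_real_derivative l) (at x0)"
    and max: "\<And>x. x \<in> {a<..<b} \<Longrightarrow> u x \<le> u x0"
  shows "l \<le> 0"
proof (rule ccontr)
  assume "\<not> l \<le> 0"
  then have "l > 0" by simp
  have "u' x0 = 0"
  proof (rule DERIV_local_max[OF du[of x0]])
    show "x0 \<in> {a<..<b}" "0 < min (x0 - a) (b - x0)"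
      using assms by auto
    show "\<forall>y. \<bar>x0 - y\<bar> < min (x0 - a) (b - x0) \<longrightarrow> u y \<le> u x0"
      by (intro allI impI max) auto
  qed
  obtain d where "d > 0" and d: "\<And>h. h > 0 \<Longrightarrow> h < d \<Longrightarrow> u' x0 < u' (x0 + h)"
    using DERIV_pos_inc_right[OF d2u \<open>l > 0\<close>] by blast
  define h where "h = min (d/2) ((b - x0)/2)"
  have h: "h > 0" "h < d" "x0 + h < b"
    using \<open>d > 0\<close> assms(2) by (auto simp: h_def min_def field_simps)
  obtain z where z: "x0 < z" "z < x0 + h" "u (x0 + h) - u x0 = (x0 + h - x0) * u' z"
    using MVT2[of x0 "x0 + h" u u'] h assms du by fastforce
  have "u' z > 0"
    using d[of "z - x0"] z h \<open>u' x0 = 0\<close> by auto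
  with h(1) have "h * u' z > 0"
    by simp
  then have "u (x0 + h) > u x0"
    using z(3) by simp
  moreover have "u (x0 + h) \<le> u x0"
    using max[of "x0 + h"] h assms by auto
  ultimately show False by simp
qed

lemma less_if_second_deriv_pos_at_max:
  fixes u u' :: "real \<Rightarrow> real"
  assumes "a < x" "x < b"
    and "\<And>y. y \<in> {a<..<b} \<Longrightarrow> (u has_real_derivative u' y) (at y)"
    and "(u' has_real_derivative l) (at x)"
    and "\<And>y. y \<in> {a<..<b} \<Longrightarrow> u y \<le> M"
    and "u x = M \<Longrightarrow> l > 0"
  shows "u x < M"
proof (rule ccontr)
  assume "\<not> u x < M"
  moreover have "u x \<le> M"
    using assms(1,2,5) by simp
  ultimately have "u x = M"
    by simp
  have "l \<le> 0"
    using assms(5) \<open>u x = M\<close> by (intro second_deriv_nonpos_at_interior_max[OF assms(1-4)]) auto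
  with assms(6) \<open>u x = M\<close> show False
    by simp
qed

lemma homogeneous_dirichlet_nonpos:
  fixes d :: "real \<Rightarrow> real"
  assumes c: "c > 0" and "continuous_on {a..b} d"
    and d1: "\<And>x. x \<in> {a<..<b} \<Longrightarrow> (d has_real_derivative d' x) (at x)"
    and d2: "\<And>x. x \<in> {a<..<b} \<Longrightarrow> (d' has_real_derivative c * d x) (at x)"
    and "d a = 0" "d b = 0" and x: "x \<in> {a..b}"
  shows "d x \<le> 0"
proof (rule ccontr)
  assume "\<not> d x \<le> 0"
  obtain x0 where x0: "x0 \<in> {a..b}" and max: "\<And>y. y \<in> {a..b} \<Longrightarrow> d y \<le> d x0"
    using continuous_attains_sup[OF compact_Icc _ assms(2)] x by fastforce
  have "d x0 > 0"
    using max[OF x] \<open>\<not> d x \<le> 0\<close> by simp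
  then have "a < x0" "x0 < b"
    using x0 assms(5,6) by (auto simp: less_le)
  have "c * d x0 \<le> 0"
    by (rule second_deriv_nonpos_at_interior_max[OF \<open>a < x0\<close> \<open>x0 < b\<close> d1 d2])
      (use \<open>a < x0\<close> \<open>x0 < b\<close> max in auto)
  with c \<open>d x0 > 0\<close> show False
    by (simp add: mult_le_0_iff)
qed

lemma homogeneous_dirichlet_eq_0:
  fixes d :: "real \<Rightarrow> real"
  assumes c: "c > 0" and d: "continuous_on {a..b} d"
    and d1: "\<And>x. x \<in> {a<..<b} \<Longrightarrow> (d has_real_derivative d' x) (at x)"
    and d2: "\<And>x. x \<in> {a<..<b} \<Longrightarrow> (d' has_real_derivative c * d x) (at x)"
    and "d a = 0" "d b = 0" and x: "x \<in> {a..b}"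
  shows "d x = 0"
proof -
  have "d x \<le> 0"
    using homogeneous_dirichlet_nonpos[OF assms] .
  moreover have "(\<lambda>x. - d x) x \<le> 0"
    by (rule homogeneous_dirichlet_nonpos[OF c _ _ _ _ _ x, where d'="\<lambda>x. - d' x"])
      (auto intro!: derivative_eq_intros continuous_intros d d1 d2 simp: assms(5,6))
  ultimately show ?thesis by simp
qed

lemma dirichlet_solution_unique:
  assumes k: "k > 0" and L: "L > 0" and F: "continuous_on {0..L} F"
    and w: "continuous_on {0..L} w"
    and w1: "\<And>x. x \<in> {0<..<L} \<Longrightarrow> (w has_real_derivative w' x) (at x)"
    and w2: "\<And>x. x \<in> {0<..<L} \<Longrightarrow> (w' has_real_derivative k^2 * w x - F x) (at x)"
    and x: "x \<in> {0..L}"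
  shows "w x = dirichlet_solution k L (w 0) (w L) F x"
proof -
  let ?R = "dirichlet_solution k L (w 0) (w L) F"
  have "(\<lambda>x. ?R x - w x) x = 0"
  proof (rule homogeneous_dirichlet_eq_0[where c="k^2" and a=0 and b=L and d="\<lambda>x. ?R x - w x"
        and d'="\<lambda>x. dirichlet_solution_deriv k L (w 0) (w L) F x - w' x"])
    show "continuous_on {0..L} (\<lambda>x. ?R x - w x)"
      by (intro continuous_intros continuous_on_dirichlet_solution_of_continuous F w k L)
    fix y assume y: "y \<in> {0<..<L}"
    show "((\<lambda>x. ?R x - w x) has_real_derivative dirichlet_solution_deriv k L (w 0) (w L) F y - w' y) (at y)"
      by (intro derivative_intros dirichlet_solution_has_derivative k L F w1 y)
    show "((\<lambda>x. dirichlet_solution_deriv k L (w 0) (w L) F x - w' x) has_real_derivative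
        k^2 * (?R y - w y)) (at y)"
      using DERIV_diff[OF dirichlet_solution_deriv_has_derivative[OF k L F y] w2[OF y]]
      by (simp add: algebra_simps)
  qed (use k L x in auto)
  then show ?thesis by simp
qed

lemma dirichlet_solution_const:
  assumes "k > 0" "L > 0" "x \<in> {0..L}"
  shows "dirichlet_solution k L c c (\<lambda>_. k^2 * c) x = c"
  using dirichlet_solution_unique[OF assms(1,2) _ _ _ _ assms(3), of "\<lambda>_. k^2 * c" "\<lambda>_. c" "\<lambda>_. 0"]
  by (auto intro!: derivative_eq_intros)

lemma dirichlet_solution_sin:
  assumes k: "k > 0" and L: "L > 0" and x: "x \<in> {0..L}"
  shows "dirichlet_solution k L 0 0 (\<lambda>y. (k^2 + (pi/L)^2) * (e * sin (pi * y / L))) x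
    = e * sin (pi * x / L)"
proof -
  let ?w = "\<lambda>y. e * sin (pi * y / L)"
  have "?w x = dirichlet_solution k L (?w 0) (?w L) (\<lambda>y. (k^2 + (pi/L)^2) * ?w y) x"
  proof (rule dirichlet_solution_unique[OF k L _ _ _ _ x, where w'="\<lambda>y. e * (cos (pi * y / L) * (pi / L))"])
    fix y :: real
    show "(?w has_real_derivative e * (cos (pi * y / L) * (pi / L))) (at y)"
      using L by (auto intro!: derivative_eq_intros)
    show "((\<lambda>y. e * (cos (pi * y / L) * (pi / L))) has_real_derivative
        k^2 * ?w y - (k^2 + (pi/L)^2) * ?w y) (at y)"
      using L by (auto intro!: derivative_eq_intros simp: power2_eq_square field_simps)
  qed (use L in \<open>auto intro!: continuous_intros\<close>)
  then show ?thesis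
    using L by simp
qed

lemma dirichlet_solution_pos:
  assumes "k > 0" "x \<in> {0<..<L}" "\<alpha> > 0" "\<beta> > 0"
  shows "dirichlet_solution k L \<alpha> \<beta> (\<lambda>_. 0) x > 0"
proof -
  have "sinh (k*(L-x)) > 0" "sinh (k*x) > 0" "sinh (k*L) > 0"
    using assms by auto
  with assms show ?thesis
    by (simp add: dirichlet_solution_def add_pos_pos)
qed

section \<open>Comparison and passage to the limit\<close>

lemma integral_weighted_mono:
  fixes w F1 F2 :: "real \<Rightarrow> real"
  assumes "continuous_on {a..b} w" "continuous_on {a..b} F1" "continuous_on {a..b} F2"
    and "\<And>y. y \<in> {a..b} \<Longrightarrow> 0 \<le> w y" "\<And>y. y \<in> {a..b} \<Longrightarrow> F1 y \<le> F2 y"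
  shows "integral {a..b} (\<lambda>y. w y * F1 y) \<le> integral {a..b} (\<lambda>y. w y * F2 y)"
  using assms by (intro integral_le integrable_continuous_interval continuous_intros mult_left_mono)

lemma dirichlet_solution_eq_split:
  assumes F: "continuous_on {0..L} F" and x: "x \<in> {0..L}"
  shows "dirichlet_solution k L \<alpha> \<beta> F x = (\<alpha> * sinh (k*(L-x)) + \<beta> * sinh (k*x)) / sinh (k*L)
    + (sinh (k*(L-x)) * integral {0..x} (\<lambda>y. sinh (k*y) * F y)
       + sinh (k*x) * integral {x..L} (\<lambda>y. sinh (k*(L-y)) * F y)) / (k * sinh (k*L))"
proof -
  let ?G = "\<lambda>y. sinh (k*(L-y)) * F y"
  have "?G integrable_on {0..L}"
    by (intro integrable_continuous_interval continuous_intros F)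
  then have "integral {0..x} ?G + integral {x..L} ?G = integral {0..L} ?G"
    using x by (intro Henstock_Kurzweil_Integration.integral_combine) auto
  then have "integral {0..L} ?G - integral {0..x} ?G = integral {x..L} ?G"
    by linarith
  then show ?thesis
    by (simp add: dirichlet_solution_def)
qed

lemma dirichlet_solution_mono:
  assumes k: "k > 0" and L: "L > 0"
    and F1: "continuous_on {0..L} F1" and F2: "continuous_on {0..L} F2"
    and le: "\<And>y. y \<in> {0..L} \<Longrightarrow> F1 y \<le> F2 y" and "\<alpha>1 \<le> \<alpha>2" "\<beta>1 \<le> \<beta>2"
    and x: "x \<in> {0..L}"
  shows "dirichlet_solution k L \<alpha>1 \<beta>1 F1 x \<le> dirichlet_solution k L \<alpha>2 \<beta>2 F2 x"
proof -
  have sub: "{0..x} \<subseteq> {0..L}" "{x..L} \<subseteq> {0..L}"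
    using x by auto
  have s: "sinh (k*(L-x)) \<ge> 0" "sinh (k*x) \<ge> 0" "sinh (k*L) > 0"
    using x k L by auto
  have "integral {0..x} (\<lambda>y. sinh (k*y) * F1 y) \<le> integral {0..x} (\<lambda>y. sinh (k*y) * F2 y)"
    using k le sub
    by (intro integral_weighted_mono continuous_intros continuous_on_subset[OF F1]
        continuous_on_subset[OF F2]) auto
  moreover have "integral {x..L} (\<lambda>y. sinh (k*(L-y)) * F1 y) \<le> integral {x..L} (\<lambda>y. sinh (k*(L-y)) * F2 y)"
    using k le sub
    by (intro integral_weighted_mono continuous_intros continuous_on_subset[OF F1]
        continuous_on_subset[OF F2]) auto
  ultimately show ?thesis
    unfolding dirichlet_solution_eq_split[OF F1 x] dirichlet_solution_eq_split[OF F2 x]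
    using s assms(6,7) k
    by (intro add_mono divide_right_mono mult_left_mono mult_right_mono) auto
qed

lemma weighted_integral_tendsto:
  fixes w :: "real \<Rightarrow> real"
  assumes w: "continuous_on {a..b} w"
    and Fn: "\<And>n. continuous_on {a..b} (Fn n)"
    and bound: "\<And>n y. y \<in> {a..b} \<Longrightarrow> \<bar>Fn n y\<bar> \<le> M"
    and lim: "\<And>y. y \<in> {a..b} \<Longrightarrow> (\<lambda>n. Fn n y) \<longlonglongrightarrow> F y"
  shows "(\<lambda>y. w y * F y) integrable_on {a..b}"
    and "(\<lambda>n. integral {a..b} (\<lambda>y. w y * Fn n y)) \<longlonglongrightarrow> integral {a..b} (\<lambda>y. w y * F y)"
proof -
  obtain B where B: "\<And>y. y \<in> {a..b} \<Longrightarrow> \<bar>w y\<bar> \<le> B"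
    using continuous_on_compact_bound[OF compact_Icc w] by auto
  have dominated: "norm (w y * Fn n y) \<le> B * M" if "y \<in> {a..b}" for n y
    unfolding real_norm_def abs_mult using B[OF that] bound[OF that]
    by (intro mult_mono) auto
  have integrable: "(\<lambda>y. w y * Fn n y) integrable_on {a..b}" for n
    by (intro integrable_continuous_interval continuous_intros w Fn)
  have "(\<lambda>n. w y * Fn n y) \<longlonglongrightarrow> w y * F y" if "y \<in> {a..b}" for y
    by (intro tendsto_mult_left lim that)
  from dominated_convergence[where h="\<lambda>_. B * M", OF integrable integrable_const_ivl dominated this]
  show "(\<lambda>y. w y * F y) integrable_on {a..b}"
    and "(\<lambda>n. integral {a..b} (\<lambda>y. w y * Fn n y)) \<longlonglongrightarrow> integral {a..b} (\<lambda>y. w y * F y)"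
    by auto
qed

context
  fixes k L M :: real and Fn :: "nat \<Rightarrow> real \<Rightarrow> real" and F :: "real \<Rightarrow> real"
  assumes k: "k > 0" and L: "L > 0"
    and Fn: "\<And>n. continuous_on {0..L} (Fn n)"
    and bound: "\<And>n y. y \<in> {0..L} \<Longrightarrow> \<bar>Fn n y\<bar> \<le> M"
    and lim: "\<And>y. y \<in> {0..L} \<Longrightarrow> (\<lambda>n. Fn n y) \<longlonglongrightarrow> F y"
begin

lemma sinh_weighted_integral_tendsto:
  assumes "x \<in> {0..L}"
  shows "(\<lambda>y. sinh (k*y) * F y) integrable_on {0..x}"
    and "(\<lambda>y. sinh (k*(L-y)) * F y) integrable_on {0..x}"
    and "(\<lambda>n. integral {0..x} (\<lambda>y. sinh (k*y) * Fn n y)) \<longlonglongrightarrow> integral {0..x} (\<lambda>y. sinh (k*y) * F y)"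
    and "(\<lambda>n. integral {0..x} (\<lambda>y. sinh (k*(L-y)) * Fn n y)) \<longlonglongrightarrow> integral {0..x} (\<lambda>y. sinh (k*(L-y)) * F y)"
proof -
  have "{0..x} \<subseteq> {0..L}"
    using assms by auto
  then have Fx: "continuous_on {0..x} (Fn n)" "\<And>y. y \<in> {0..x} \<Longrightarrow> \<bar>Fn n y\<bar> \<le> M"
    "\<And>y. y \<in> {0..x} \<Longrightarrow> (\<lambda>n. Fn n y) \<longlonglongrightarrow> F y" for n
    using continuous_on_subset[OF Fn] bound lim by auto
  have "(\<lambda>y. w y * F y) integrable_on {0..x}
      \<and> (\<lambda>n. integral {0..x} (\<lambda>y. w y * Fn n y)) \<longlonglongrightarrow> integral {0..x} (\<lambda>y. w y * F y)"
    if "continuous_on {0..x} w" for w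
    using weighted_integral_tendsto[where Fn=Fn, OF that Fx] by blast
  from this[of "\<lambda>y. sinh (k*y)"] this[of "\<lambda>y. sinh (k*(L-y))"]
  show "(\<lambda>y. sinh (k*y) * F y) integrable_on {0..x}"
    and "(\<lambda>y. sinh (k*(L-y)) * F y) integrable_on {0..x}"
    and "(\<lambda>n. integral {0..x} (\<lambda>y. sinh (k*y) * Fn n y)) \<longlonglongrightarrow> integral {0..x} (\<lambda>y. sinh (k*y) * F y)"
    and "(\<lambda>n. integral {0..x} (\<lambda>y. sinh (k*(L-y)) * Fn n y)) \<longlonglongrightarrow> integral {0..x} (\<lambda>y. sinh (k*(L-y)) * F y)"
    by (simp_all add: continuous_intros)
qed

lemma continuous_on_dirichlet_solution_of_limit:
  "continuous_on {0..L} (dirichlet_solution k L \<alpha> \<beta> F)"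
  using L by (intro continuous_on_dirichlet_solution k L sinh_weighted_integral_tendsto) auto

lemma dirichlet_solution_tendsto:
  assumes x: "x \<in> {0..L}"
  shows "(\<lambda>n. dirichlet_solution k L \<alpha> \<beta> (Fn n) x) \<longlonglongrightarrow> dirichlet_solution k L \<alpha> \<beta> F x"
  unfolding dirichlet_solution_def
  using k L x by (intro tendsto_intros sinh_weighted_integral_tendsto) auto

end

section \<open>Monotone iteration for the competition system\<close>

type_synonym profile = "(real \<Rightarrow> real) \<times> (real \<Rightarrow> real)"

locale competition_system =
  fixes a b L :: real
  assumes L_pos: "L > 0" and a_pos: "0 < a" and a_le_1: "a \<le> 1" and b_pos: "0 < b"
begin

text \<open>Any \<open>k\<close> with \<open>k\<^sup>2 \<ge> b + 2\<close> would do.\<close>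

definition k :: real where
  "k = b + 2"

lemma k_pos: "k > 0"
  using b_pos by (simp add: k_def)

lemma k_sq_ge: "b + 2 \<le> k^2"
proof -
  have "k * 1 \<le> k * k"
    using b_pos by (intro mult_left_mono) (auto simp: k_def)
  then show ?thesis
    by (simp add: k_def power2_eq_square)
qed

definition reaction_u :: "real \<Rightarrow> real \<Rightarrow> real" where
  "reaction_u u v = u * (1 - u - a * v) + k^2 * u"

definition reaction_v :: "real \<Rightarrow> real \<Rightarrow> real" where
  "reaction_v u v = v * (1 - b * u - v) + k^2 * v"

lemma reaction_u_mono:
  assumes "0 \<le> u1" "u1 \<le> u2" "u2 \<le> 1" "0 \<le> v2" "v2 \<le> v1" "v1 \<le> 1"
  shows "reaction_u u1 v1 \<le> reaction_u u2 v2"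
proof -
  have "reaction_u u2 v2 - reaction_u u1 v1
      = (u2 - u1) * (1 + k^2 - (u1 + u2) - a * v2) + a * u1 * (v1 - v2)"
    by (simp add: reaction_u_def algebra_simps)
  moreover have "a * v2 \<le> 1"
    using assms a_pos a_le_1 by (auto intro!: mult_le_one)
  then have "(u2 - u1) * (1 + k^2 - (u1 + u2) - a * v2) \<ge> 0"
    using assms k_sq_ge b_pos by (intro mult_nonneg_nonneg) auto
  moreover have "a * u1 * (v1 - v2) \<ge> 0"
    using assms a_pos by simp
  ultimately show ?thesis
    by linarith
qed

lemma reaction_v_antimono:
  assumes "0 \<le> u1" "u1 \<le> u2" "u2 \<le> 1" "0 \<le> v2" "v2 \<le> v1" "v1 \<le> 1"
  shows "reaction_v u2 v2 \<le> reaction_v u1 v1"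
proof -
  have "reaction_v u1 v1 - reaction_v u2 v2
      = (v1 - v2) * (1 + k^2 - (v1 + v2) - b * u1) + b * v2 * (u2 - u1)"
    by (simp add: reaction_v_def algebra_simps)
  moreover have "b * u1 \<le> b"
    using assms b_pos by (auto intro!: mult_left_le)
  then have "(v1 - v2) * (1 + k^2 - (v1 + v2) - b * u1) \<ge> 0"
    using assms k_sq_ge by (intro mult_nonneg_nonneg) auto
  moreover have "b * v2 * (u2 - u1) \<ge> 0"
    using assms b_pos by simp
  ultimately show ?thesis
    by linarith
qed

lemma reaction_u_bounds:
  assumes "0 \<le> u" "u \<le> 1" "0 \<le> v" "v \<le> 1"
  shows "0 \<le> reaction_u u v" "reaction_u u v \<le> k^2"
proof -
  have "reaction_u 0 1 \<le> reaction_u u v" "reaction_u u v \<le> reaction_u 1 0"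
    using assms by (intro reaction_u_mono; simp)+
  then show "0 \<le> reaction_u u v" "reaction_u u v \<le> k^2"
    by (simp_all add: reaction_u_def)
qed

lemma reaction_v_bounds:
  assumes "0 \<le> u" "u \<le> 1" "0 \<le> v" "v \<le> 1"
  shows "0 \<le> reaction_v u v" "reaction_v u v \<le> k^2"
proof -
  have "reaction_v 1 0 \<le> reaction_v u v" "reaction_v u v \<le> reaction_v 0 1"
    using assms by (intro reaction_v_antimono; simp)+
  then show "0 \<le> reaction_v u v" "reaction_v u v \<le> k^2"
    by (simp_all add: reaction_v_def)
qed

lemma continuous_on_reaction [continuous_intros]:
  assumes "continuous_on S u" "continuous_on S v"
  shows "continuous_on S (\<lambda>y. reaction_u (u y) (v y))" "continuous_on S (\<lambda>y. reaction_v (u y) (v y))"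
  unfolding reaction_u_def reaction_v_def using assms by (auto intro!: continuous_intros)

lemma tendsto_reaction:
  assumes "X \<longlonglongrightarrow> u" "Y \<longlonglongrightarrow> v"
  shows "(\<lambda>n. reaction_u (X n) (Y n)) \<longlonglongrightarrow> reaction_u u v"
    "(\<lambda>n. reaction_v (X n) (Y n)) \<longlonglongrightarrow> reaction_v u v"
  unfolding reaction_u_def reaction_v_def using assms by (auto intro!: tendsto_intros)

definition in_box :: "profile \<Rightarrow> bool" where
  "in_box p \<longleftrightarrow> continuous_on {0..L} (fst p) \<and> continuous_on {0..L} (snd p) \<and>
     (\<forall>y\<in>{0..L}. 0 \<le> fst p y \<and> fst p y \<le> 1 \<and> 0 \<le> snd p y \<and> snd p y \<le> 1)"

definition competitive_le :: "profile \<Rightarrow> profile \<Rightarrow> bool" where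
  "competitive_le p q \<longleftrightarrow> (\<forall>y\<in>{0..L}. fst p y \<le> fst q y \<and> snd q y \<le> snd p y)"

definition iteration_step :: "profile \<Rightarrow> profile" where
  "iteration_step p =
     (dirichlet_solution k L 0 0 (\<lambda>y. reaction_u (fst p y) (snd p y)),
      dirichlet_solution k L 1 1 (\<lambda>y. reaction_v (fst p y) (snd p y)))"

definition is_fixed_point :: "profile \<Rightarrow> bool" where
  "is_fixed_point p \<longleftrightarrow>
     (\<forall>x\<in>{0..L}. fst p x = fst (iteration_step p) x \<and> snd p x = snd (iteration_step p) x)"

lemma iteration_step_in_box:
  assumes "in_box p"
  shows "in_box (iteration_step p)"
proof -
  obtain u v where p: "p = (u, v)"
    by fastforce
  have u: "continuous_on {0..L} u" and v: "continuous_on {0..L} v"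
    and box: "\<And>y. y \<in> {0..L} \<Longrightarrow> 0 \<le> u y \<and> u y \<le> 1 \<and> 0 \<le> v y \<and> v y \<le> 1"
    using assms by (auto simp: in_box_def p)
  note mono = dirichlet_solution_mono[OF k_pos L_pos]
  have "0 \<le> dirichlet_solution k L 0 0 (\<lambda>y. reaction_u (u y) (v y)) x"
    and "dirichlet_solution k L 0 0 (\<lambda>y. reaction_u (u y) (v y)) x \<le> 1"
    and "0 \<le> dirichlet_solution k L 1 1 (\<lambda>y. reaction_v (u y) (v y)) x"
    and "dirichlet_solution k L 1 1 (\<lambda>y. reaction_v (u y) (v y)) x \<le> 1"
    if x: "x \<in> {0..L}" for x
  proof -
    have lower: "0 \<le> dirichlet_solution k L \<alpha> \<beta> G x"
      if "continuous_on {0..L} G" "\<And>y. y \<in> {0..L} \<Longrightarrow> 0 \<le> G y" "0 \<le> \<alpha>" "0 \<le> \<beta>" for G \<alpha> \<beta>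
      using mono[OF continuous_on_const that(1) _ that(3,4) x] that(2) dirichlet_solution_zero
      by metis
    have upper: "dirichlet_solution k L \<alpha> \<beta> G x \<le> 1"
      if "continuous_on {0..L} G" "\<And>y. y \<in> {0..L} \<Longrightarrow> G y \<le> k^2" "\<alpha> \<le> 1" "\<beta> \<le> 1" for G \<alpha> \<beta>
      using mono[OF that(1) continuous_on_const _ that(3,4) x] that(2)
        dirichlet_solution_const[OF k_pos L_pos x, of 1]
      by (metis mult_1_right)
    show "0 \<le> dirichlet_solution k L 0 0 (\<lambda>y. reaction_u (u y) (v y)) x"
      "dirichlet_solution k L 0 0 (\<lambda>y. reaction_u (u y) (v y)) x \<le> 1"
      "0 \<le> dirichlet_solution k L 1 1 (\<lambda>y. reaction_v (u y) (v y)) x"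
      "dirichlet_solution k L 1 1 (\<lambda>y. reaction_v (u y) (v y)) x \<le> 1"
      using box reaction_u_bounds reaction_v_bounds
      by (auto intro!: lower upper continuous_intros u v)
  qed
  then show ?thesis
    unfolding in_box_def iteration_step_def p
    by (auto intro!: continuous_on_dirichlet_solution_of_continuous k_pos L_pos continuous_intros u v)
qed

lemma iteration_step_mono:
  assumes "in_box p" "in_box q" "competitive_le p q"
  shows "competitive_le (iteration_step p) (iteration_step q)"
proof -
  obtain u1 v1 u2 v2 where pq: "p = (u1, v1)" "q = (u2, v2)"
    by fastforce
  have cont: "continuous_on {0..L} u1" "continuous_on {0..L} v1"
      "continuous_on {0..L} u2" "continuous_on {0..L} v2"
    and le: "\<And>y. y \<in> {0..L} \<Longrightarrow>
      0 \<le> u1 y \<and> u1 y \<le> u2 y \<and> u2 y \<le> 1 \<and> 0 \<le> v2 y \<and> v2 y \<le> v1 y \<and> v1 y \<le> 1"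
    using assms by (auto simp: in_box_def competitive_le_def pq)
  show ?thesis
    unfolding competitive_le_def iteration_step_def pq fst_conv snd_conv
    using le
    by (auto intro!: dirichlet_solution_mono k_pos L_pos continuous_intros cont
        reaction_u_mono reaction_v_antimono)
qed

lemma iterates_monotone:
  assumes "in_box p0" "competitive_le p0 (iteration_step p0)"
  shows "in_box ((iteration_step ^^ n) p0) \<and>
    competitive_le ((iteration_step ^^ n) p0) ((iteration_step ^^ Suc n) p0)"
proof (induction n)
  case 0
  then show ?case
    using assms by simp
next
  case (Suc n)
  then show ?case
    by (simp add: iteration_step_in_box iteration_step_mono)
qed

lemma iterates_converge:
  assumes "in_box p0" "competitive_le p0 (iteration_step p0)"
  obtains u v where
    "\<And>x. x \<in> {0..L} \<Longrightarrow> (\<lambda>n. fst ((iteration_step ^^ n) p0) x) \<longlonglongrightarrow> u x"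
    "\<And>x. x \<in> {0..L} \<Longrightarrow> (\<lambda>n. snd ((iteration_step ^^ n) p0) x) \<longlonglongrightarrow> v x"
    "competitive_le p0 (u, v)"
    "\<And>x. x \<in> {0..L} \<Longrightarrow> 0 \<le> u x \<and> u x \<le> 1 \<and> 0 \<le> v x \<and> v x \<le> 1"
proof -
  let ?P = "\<lambda>n. (iteration_step ^^ n) p0"
  define u where "u x = lim (\<lambda>n. fst (?P n) x)" for x
  define v where "v x = lim (\<lambda>n. snd (?P n) x)" for x
  have box: "0 \<le> fst (?P n) x \<and> fst (?P n) x \<le> 1 \<and> 0 \<le> snd (?P n) x \<and> snd (?P n) x \<le> 1"
    if "x \<in> {0..L}" for n x
    using iterates_monotone[OF assms, of n] that by (auto simp: in_box_def)
  have mono: "incseq (\<lambda>n. fst (?P n) x)" "decseq (\<lambda>n. snd (?P n) x)" if "x \<in> {0..L}" for x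
    using iterates_monotone[OF assms] that
    by (auto intro!: incseq_SucI decseq_SucI simp: competitive_le_def)
  have u: "(\<lambda>n. fst (?P n) x) \<longlonglongrightarrow> u x \<and> fst p0 x \<le> u x \<and> u x \<le> 1" if x: "x \<in> {0..L}" for x
  proof -
    obtain l where l: "(\<lambda>n. fst (?P n) x) \<longlonglongrightarrow> l" "\<forall>i. fst (?P i) x \<le> l"
      using incseq_convergent[OF mono(1)[OF x], of 1] box[OF x] by blast
    moreover have "l \<le> 1"
      using box[OF x] by (intro LIMSEQ_le_const2[OF l(1)]) auto
    ultimately show ?thesis
      using limI[OF l(1)] l(2)[rule_format, of 0] by (simp add: u_def)
  qed
  have v: "(\<lambda>n. snd (?P n) x) \<longlonglongrightarrow> v x \<and> v x \<le> snd p0 x \<and> 0 \<le> v x" if x: "x \<in> {0..L}" for x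
  proof -
    obtain l where l: "(\<lambda>n. snd (?P n) x) \<longlonglongrightarrow> l" "\<forall>i. l \<le> snd (?P i) x"
      using decseq_convergent[OF mono(2)[OF x], of 0] box[OF x] by blast
    moreover have "0 \<le> l"
      using box[OF x] by (intro LIMSEQ_le_const[OF l(1)]) auto
    ultimately show ?thesis
      using limI[OF l(1)] l(2)[rule_format, of 0] by (simp add: v_def)
  qed
  show thesis
  proof
    show "competitive_le p0 (u, v)"
      using u v by (simp add: competitive_le_def)
    show "0 \<le> u x \<and> u x \<le> 1 \<and> 0 \<le> v x \<and> v x \<le> 1" if "x \<in> {0..L}" for x
      using u[OF that] v[OF that] box[OF that, of 0] by auto
  qed (use u v in blast)+
qed

lemma iteration_step_tendsto:
  assumes P: "\<And>n. in_box (P n)"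
    and u: "\<And>x. x \<in> {0..L} \<Longrightarrow> (\<lambda>n. fst (P n) x) \<longlonglongrightarrow> u x"
    and v: "\<And>x. x \<in> {0..L} \<Longrightarrow> (\<lambda>n. snd (P n) x) \<longlonglongrightarrow> v x"
  shows "\<And>x. x \<in> {0..L} \<Longrightarrow> (\<lambda>n. fst (iteration_step (P n)) x) \<longlonglongrightarrow> fst (iteration_step (u, v)) x"
    and "\<And>x. x \<in> {0..L} \<Longrightarrow> (\<lambda>n. snd (iteration_step (P n)) x) \<longlonglongrightarrow> snd (iteration_step (u, v)) x"
    and "continuous_on {0..L} (fst (iteration_step (u, v)))"
    and "continuous_on {0..L} (snd (iteration_step (u, v)))"
proof -
  define Fu where "Fu n y = reaction_u (fst (P n) y) (snd (P n) y)" for n y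
  define Fv where "Fv n y = reaction_v (fst (P n) y) (snd (P n) y)" for n y
  have step: "iteration_step (P n) = (dirichlet_solution k L 0 0 (Fu n), dirichlet_solution k L 1 1 (Fv n))"
    for n
    by (simp add: iteration_step_def Fu_def[abs_def] Fv_def[abs_def])
  have cont: "continuous_on {0..L} (Fu n)" "continuous_on {0..L} (Fv n)" for n
    using P[of n] unfolding Fu_def Fv_def in_box_def by (auto intro!: continuous_intros)
  have bounds: "\<bar>Fu n y\<bar> \<le> k^2" "\<bar>Fv n y\<bar> \<le> k^2" if "y \<in> {0..L}" for n y
    using reaction_u_bounds[of "fst (P n) y" "snd (P n) y"]
      reaction_v_bounds[of "fst (P n) y" "snd (P n) y"] P[of n] that
    by (auto simp: Fu_def Fv_def in_box_def)
  have lim: "(\<lambda>n. Fu n y) \<longlonglongrightarrow> reaction_u (u y) (v y)" "(\<lambda>n. Fv n y) \<longlonglongrightarrow> reaction_v (u y) (v y)"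
    if "y \<in> {0..L}" for y
    unfolding Fu_def Fv_def using tendsto_reaction[OF u[OF that] v[OF that]] by auto
  show "(\<lambda>n. fst (iteration_step (P n)) x) \<longlonglongrightarrow> fst (iteration_step (u, v)) x"
    and "(\<lambda>n. snd (iteration_step (P n)) x) \<longlonglongrightarrow> snd (iteration_step (u, v)) x"
    if "x \<in> {0..L}" for x
    unfolding step fst_conv snd_conv
    using dirichlet_solution_tendsto[OF k_pos L_pos cont(1) bounds(1) lim(1) that]
      dirichlet_solution_tendsto[OF k_pos L_pos cont(2) bounds(2) lim(2) that]
    by (simp_all add: iteration_step_def)
  show "continuous_on {0..L} (fst (iteration_step (u, v)))"
    and "continuous_on {0..L} (snd (iteration_step (u, v)))"
    using continuous_on_dirichlet_solution_of_limit[OF k_pos L_pos cont(1) bounds(1) lim(1)]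
      continuous_on_dirichlet_solution_of_limit[OF k_pos L_pos cont(2) bounds(2) lim(2)]
    by (simp_all add: iteration_step_def)
qed

lemma exists_fixed_point:
  assumes "in_box p0" "competitive_le p0 (iteration_step p0)"
  obtains u v where "in_box (u, v)" "competitive_le p0 (u, v)" "is_fixed_point (u, v)"
proof -
  let ?P = "\<lambda>n. (iteration_step ^^ n) p0"
  obtain u v where
    u_lim: "\<And>x. x \<in> {0..L} \<Longrightarrow> (\<lambda>n. fst (?P n) x) \<longlonglongrightarrow> u x" and
    v_lim: "\<And>x. x \<in> {0..L} \<Longrightarrow> (\<lambda>n. snd (?P n) x) \<longlonglongrightarrow> v x" and
    "competitive_le p0 (u, v)" and
    uv_box: "\<And>x. x \<in> {0..L} \<Longrightarrow> 0 \<le> u x \<and> u x \<le> 1 \<and> 0 \<le> v x \<and> v x \<le> 1"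
    using iterates_converge[OF assms] by blast
  have P_box: "in_box (?P n)" for n
    using iterates_monotone[OF assms] by blast
  have u_step: "(\<lambda>n. fst (iteration_step (?P n)) x) \<longlonglongrightarrow> u x"
    and v_step: "(\<lambda>n. snd (iteration_step (?P n)) x) \<longlonglongrightarrow> v x" if "x \<in> {0..L}" for x
    using LIMSEQ_Suc[OF u_lim[OF that]] LIMSEQ_Suc[OF v_lim[OF that]] by simp_all
  have step_lim:
    "(\<lambda>n. fst (iteration_step (?P n)) x) \<longlonglongrightarrow> fst (iteration_step (u, v)) x"
    "(\<lambda>n. snd (iteration_step (?P n)) x) \<longlonglongrightarrow> snd (iteration_step (u, v)) x"
    if "x \<in> {0..L}" for x
    by (rule iteration_step_tendsto; (assumption | rule P_box u_lim v_lim that)+)+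
  have fixed: "u x = fst (iteration_step (u, v)) x \<and> v x = snd (iteration_step (u, v)) x"
    if "x \<in> {0..L}" for x
    using LIMSEQ_unique[OF u_step[OF that] step_lim(1)[OF that]]
      LIMSEQ_unique[OF v_step[OF that] step_lim(2)[OF that]] by simp
  have step_cont: "continuous_on {0..L} (fst (iteration_step (u, v)))"
    "continuous_on {0..L} (snd (iteration_step (u, v)))"
    by (rule iteration_step_tendsto; (assumption | rule P_box u_lim v_lim)+)+
  have "continuous_on {0..L} u" "continuous_on {0..L} v"
    using continuous_on_eq[OF step_cont(1), of u] continuous_on_eq[OF step_cont(2), of v] fixed
    by auto
  then have "in_box (u, v)"
    using uv_box by (simp add: in_box_def)
  then show thesis
    using that \<open>competitive_le p0 (u, v)\<close> fixed by (auto simp: is_fixed_point_def)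
qed

lemma fixed_point_has_derivatives:
  assumes "in_box (u, v)" "is_fixed_point (u, v)" and x: "x \<in> {0<..<L}"
  defines "u' \<equiv> dirichlet_solution_deriv k L 0 0 (\<lambda>y. reaction_u (u y) (v y))"
    and "v' \<equiv> dirichlet_solution_deriv k L 1 1 (\<lambda>y. reaction_v (u y) (v y))"
  shows "(u has_real_derivative u' x) (at x)"
    and "(u' has_real_derivative - (u x * (1 - u x - a * v x))) (at x)"
    and "(v has_real_derivative v' x) (at x)"
    and "(v' has_real_derivative - (v x * (1 - b * u x - v x))) (at x)"
proof -
  have cu: "continuous_on {0..L} u" and cv: "continuous_on {0..L} v"
    using assms(1) by (auto simp: in_box_def)
  have Fu: "continuous_on {0..L} (\<lambda>y. reaction_u (u y) (v y))"
    and Fv: "continuous_on {0..L} (\<lambda>y. reaction_v (u y) (v y))"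
    by (intro continuous_intros cu cv)+
  have u_eq: "u y = dirichlet_solution k L 0 0 (\<lambda>y. reaction_u (u y) (v y)) y"
    and v_eq: "v y = dirichlet_solution k L 1 1 (\<lambda>y. reaction_v (u y) (v y)) y"
    if "y \<in> {0..L}" for y
    using assms(2) that by (simp_all add: is_fixed_point_def iteration_step_def)
  show "(u has_real_derivative u' x) (at x)"
    and "(u' has_real_derivative - (u x * (1 - u x - a * v x))) (at x)"
    using eq_dirichlet_solution_has_derivatives[OF k_pos L_pos Fu u_eq x]
    by (simp_all add: u'_def reaction_u_def algebra_simps)
  show "(v has_real_derivative v' x) (at x)"
    and "(v' has_real_derivative - (v x * (1 - b * u x - v x))) (at x)"
    using eq_dirichlet_solution_has_derivatives[OF k_pos L_pos Fv v_eq x]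
    by (simp_all add: v'_def reaction_v_def algebra_simps)
qed

lemma fixed_point_solves:
  assumes box: "in_box (u, v)" and fixed: "is_fixed_point (u, v)"
    and u_pos: "\<And>x. x \<in> {0<..<L} \<Longrightarrow> 0 < u x"
  shows "\<exists>\<phi> \<phi>' \<phi>'' \<psi> \<psi>' \<psi>'' :: real \<Rightarrow> real.
    continuous_on {0..L} \<phi> \<and> continuous_on {0..L} \<psi> \<and>
    (\<forall>x\<in>{0<..<L}. (\<phi> has_real_derivative \<phi>' x) (at x) \<and>
                      (\<phi>' has_real_derivative \<phi>'' x) (at x) \<and>
                      (\<psi> has_real_derivative \<psi>' x) (at x) \<and>
                      (\<psi>' has_real_derivative \<psi>'' x) (at x) \<and>
                      - \<phi>'' x = \<phi> x * (1 - \<phi> x - a * \<psi> x) \<and>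
                      - \<psi>'' x = \<psi> x * (1 - b * \<phi> x - \<psi> x) \<and>
                      0 < \<phi> x \<and> \<phi> x < 1 \<and> 0 < \<psi> x \<and> \<psi> x < 1) \<and>
    \<phi> 0 = 0 \<and> \<phi> L = 0 \<and> \<psi> 0 = 1 \<and> \<psi> L = 1"
proof -
  have cu: "continuous_on {0..L} u" and cv: "continuous_on {0..L} v"
    and bounds: "\<And>y. y \<in> {0..L} \<Longrightarrow> 0 \<le> u y \<and> u y \<le> 1 \<and> 0 \<le> v y \<and> v y \<le> 1"
    using box by (auto simp: in_box_def)
  have v_eq: "v y = dirichlet_solution k L 1 1 (\<lambda>y. reaction_v (u y) (v y)) y" if "y \<in> {0..L}" for y
    using fixed that by (simp add: is_fixed_point_def iteration_step_def)
  define u' where "u' = dirichlet_solution_deriv k L 0 0 (\<lambda>y. reaction_u (u y) (v y))"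
  define v' where "v' = dirichlet_solution_deriv k L 1 1 (\<lambda>y. reaction_v (u y) (v y))"
  define u'' where "u'' x = - (u x * (1 - u x - a * v x))" for x
  define v'' where "v'' x = - (v x * (1 - b * u x - v x))" for x
  note derivs = fixed_point_has_derivatives[OF box fixed, folded u'_def v'_def u''_def v''_def]
  have v_pos: "0 < v x" if x: "x \<in> {0<..<L}" for x
  proof -
    have "dirichlet_solution k L 1 1 (\<lambda>_. 0) x \<le> dirichlet_solution k L 1 1 (\<lambda>y. reaction_v (u y) (v y)) x"
      using x bounds reaction_v_bounds
      by (intro dirichlet_solution_mono k_pos L_pos continuous_on_const continuous_intros cu cv) auto
    then show ?thesis
      using dirichlet_solution_pos[OF k_pos x, of 1 1] v_eq[of x] x by simp
  qed
  have u_less_1: "u x < 1" if x: "x \<in> {0<..<L}" for x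
  proof (rule less_if_second_deriv_pos_at_max[where a=0 and b=L, OF _ _ derivs(1) derivs(2)[OF x]])
    show "u y \<le> 1" if "y \<in> {0<..<L}" for y
      using bounds that by simp
    show "u x = 1 \<Longrightarrow> u'' x > 0"
      using a_pos v_pos[OF x] by (simp add: u''_def)
  qed (use x in auto)
  have v_less_1: "v x < 1" if x: "x \<in> {0<..<L}" for x
  proof (rule less_if_second_deriv_pos_at_max[where a=0 and b=L, OF _ _ derivs(3) derivs(4)[OF x]])
    show "v y \<le> 1" if "y \<in> {0<..<L}" for y
      using bounds that by simp
    show "v x = 1 \<Longrightarrow> v'' x > 0"
      using b_pos u_pos[OF x] by (simp add: v''_def)
  qed (use x in auto)
  have boundary: "u 0 = 0" "u L = 0" "v 0 = 1" "v L = 1"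
    using fixed L_pos k_pos by (auto simp: is_fixed_point_def iteration_step_def)
  have interior: "\<forall>x\<in>{0<..<L}. (u has_real_derivative u' x) (at x) \<and>
      (u' has_real_derivative u'' x) (at x) \<and>
      (v has_real_derivative v' x) (at x) \<and>
      (v' has_real_derivative v'' x) (at x) \<and>
      - u'' x = u x * (1 - u x - a * v x) \<and>
      - v'' x = v x * (1 - b * u x - v x) \<and>
      0 < u x \<and> u x < 1 \<and> 0 < v x \<and> v x < 1"
    using derivs u_pos v_pos u_less_1 v_less_1 by (simp add: u''_def v''_def)
  show ?thesis
    by (intro exI[of _ u] exI[of _ u'] exI[of _ u''] exI[of _ v] exI[of _ v'] exI[of _ v'']
        conjI cu cv interior boundary)
qed

lemma sine_subsolution:
  assumes e: "0 < e" "e \<le> 1 - a - (pi/L)^2"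
  defines "p0 \<equiv> (\<lambda>x. e * sin (pi * x / L), \<lambda>_. 1)"
  shows "in_box p0" and "competitive_le p0 (iteration_step p0)"
proof -
  let ?s = "\<lambda>x. e * sin (pi * x / L)"
  have s_bounds: "0 \<le> ?s x \<and> ?s x \<le> e" if "x \<in> {0..L}" for x
  proof -
    have "0 \<le> pi * x / L" "pi * x / L \<le> pi"
      using that L_pos by (auto simp: field_simps)
    then have "0 \<le> sin (pi * x / L)"
      by (rule sin_ge_zero)
    then show ?thesis
      using e by (auto intro: mult_left_le)
  qed
  have "e \<le> 1"
    using e a_pos zero_le_power2[of "pi/L"] by linarith
  have cs: "continuous_on {0..L} ?s"
    using L_pos by (intro continuous_intros) auto
  show "in_box p0"
    using cs s_bounds \<open>e \<le> 1\<close> by (fastforce simp: in_box_def p0_def)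
  have "?s x \<le> fst (iteration_step p0) x" if x: "x \<in> {0..L}" for x
  proof -
    have "?s x = dirichlet_solution k L 0 0 (\<lambda>y. (k^2 + (pi/L)^2) * ?s y) x"
      using dirichlet_solution_sin[OF k_pos L_pos x] by simp
    also have "\<dots> \<le> dirichlet_solution k L 0 0 (\<lambda>y. reaction_u (?s y) 1) x"
    proof (rule dirichlet_solution_mono[OF k_pos L_pos _ _ _ order_refl order_refl x])
      fix y assume "y \<in> {0..L}"
      then have "0 \<le> ?s y" "?s y \<le> e"
        using s_bounds by auto
      with e have "(pi/L)^2 \<le> 1 - ?s y - a" "0 \<le> ?s y"
        by linarith+
      then have "(pi/L)^2 * ?s y \<le> (1 - ?s y - a) * ?s y"
        by (rule mult_right_mono)
      then show "(k^2 + (pi/L)^2) * ?s y \<le> reaction_u (?s y) 1"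
        by (simp add: reaction_u_def algebra_simps)
    qed (intro continuous_intros cs)+
    finally show ?thesis
      by (simp add: iteration_step_def p0_def)
  qed
  moreover have "snd (iteration_step p0) x \<le> 1" if "x \<in> {0..L}" for x
    using iteration_step_in_box[OF \<open>in_box p0\<close>] that by (simp add: in_box_def)
  ultimately show "competitive_le p0 (iteration_step p0)"
    by (simp add: competitive_le_def p0_def)
qed

end

theorem proposition4:
  fixes b L abar :: real
  assumes "b > 1" and "L > pi" and "abar > 0" and "abar < 1 - pi^2 / L^2"
  shows "\<exists>\<phi> \<phi>' \<phi>'' \<psi> \<psi>' \<psi>'' :: real \<Rightarrow> real.
    continuous_on {0..L} \<phi> \<and> continuous_on {0..L} \<psi> \<and>
    (\<forall>x\<in>{0<..<L}. (\<phi> has_real_derivative \<phi>' x) (at x) \<and>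
                      (\<phi>' has_real_derivative \<phi>'' x) (at x) \<and>
                      (\<psi> has_real_derivative \<psi>' x) (at x) \<and>
                      (\<psi>' has_real_derivative \<psi>'' x) (at x) \<and>
                      - \<phi>'' x = \<phi> x * (1 - \<phi> x - abar * \<psi> x) \<and>
                      - \<psi>'' x = \<psi> x * (1 - b * \<phi> x - \<psi> x) \<and>
                      0 < \<phi> x \<and> \<phi> x < 1 \<and> 0 < \<psi> x \<and> \<psi> x < 1) \<and>
    \<phi> 0 = 0 \<and> \<phi> L = 0 \<and> \<psi> 0 = 1 \<and> \<psi> L = 1"
proof -
  have "L > 0"
    using assms(2) pi_gt_zero by linarith
  define e where "e = 1 - abar - (pi/L)^2"
  have "0 < e" "e \<le> 1 - abar - (pi/L)^2"
    using assms(4) by (simp_all add: e_def power_divide)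
  interpret competition_system abar b L
  proof
    show "abar \<le> 1"
      using \<open>0 < e\<close> zero_le_power2[of "pi/L"] unfolding e_def by linarith
  qed (use assms \<open>L > 0\<close> in auto)
  obtain u v where "in_box (u, v)"
    and below: "competitive_le (\<lambda>x. e * sin (pi * x / L), \<lambda>_. 1) (u, v)"
    and "is_fixed_point (u, v)"
    using exists_fixed_point[OF sine_subsolution[OF \<open>0 < e\<close> \<open>e \<le> _\<close>]] by blast
  have u_pos: "0 < u x" if "x \<in> {0<..<L}" for x
  proof -
    have "0 < e * sin (pi * x / L)"
      using that \<open>L > 0\<close> \<open>0 < e\<close> by (intro mult_pos_pos sin_gt_zero) (auto simp: field_simps)
    also have "\<dots> \<le> u x"
      using below that by (simp add: competitive_le_def)
    finally show ?thesis .
  qed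
  show ?thesis
    using fixed_point_solves[OF \<open>in_box (u, v)\<close> \<open>is_fixed_point (u, v)\<close> u_pos] .
qed

end
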